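(* For $i=1,2$ let $(\sigma_i,\varepsilon_i)$ be admissible pairs of $K$ and $q_i:V\to\overline K^{\sigma_i,\varepsilon_i}/\overline R_i$ non-trivial generalized $(\sigma_i,\varepsilon_i)$-quadratic forms with $S_{q_1}=S_{q_2}$. Assume that the polar space $S:=S_{q_1}=S_{q_2}$ has non-degenerate rank at least $2$. Then $q_1$ and $q_2$ are proportional: there is $\kappa\in K\setminus\{0\}$ such that $\sigma_2(t)=\kappa\sigma_1(t)\kappa^{-1}$ for all $t$, $\varepsilon_2=\kappa\kappa^{-\sigma_1}\varepsilon_1$, $\overline R_2=\kappa\overline R_1$, and $q_2(x)=\kappa q_1(x)$ for all $x\in V$.
   Context: $K$ division ring, $V$ right $K$-vector space. Admissible pair $(\sigma,\varepsilon)$: $\sigma$ anti-automorphism, $\varepsilon^\sigma\varepsilon=1$, $t^{\sigma^2}=\varepsilon t\varepsilon^{-1}$. $K_{\sigma,\varepsilon}=\{t-t^\sigma\varepsilon\}$, $\overline K^{\sigma,\varepsilon}=K/K_{\sigma,\varepsilon}$, $\bar t$ class of $t$, $\bar t\circ\lambda=\overline{\lambda^\sigma t\lambda}$; closed subgroups: stable under all $\circ\lambda$. If $(\sigma_2,\varepsilon_2)$ is obtained from $(\sigma_1,\varepsilon_1)$ via $\kappa$ as in the claim, then $\kappa K_{\sigma_1,\varepsilon_1}=K_{\sigma_2,\varepsilon_2}$, so left multiplication by $\kappa$ induces a group isomorphism $\overline K^{\sigma_1,\varepsilon_1}\to\overline K^{\sigma_2,\varepsilon_2}$; $\kappa\overline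 R_1$ and $\kappa q_1(x)$ are understood via this map. A generalized $(\sigma,\varepsilon)$-quadratic form with co-defect closed $\overline R$: $q:V\to\overline K^{\sigma,\varepsilon}/\overline R$ with $q(x\lambda)=q(x)\circ\lambda$ and a trace-valued $(\sigma,\varepsilon)$-sesquilinear $f$ ($f(x\lambda,y\mu)=\lambda^\sigma f(x,y)\mu$, $f(y,x)=f(x,y)^\sigma\varepsilon$, $f(x,x)\in\{t+t^\sigma\varepsilon\}$) with $q(x+y)=q(x)+q(y)+(\overline{f(x,y)}+\overline R)$. Non-trivial: not identically $\overline R$. $S_q$: the point-line geometry of points $[x]$ with $q(x)=\overline R$ and lines of $\mathrm{PG}(V)$ consisting of such points; it is a polar space. The non-degenerate rank of a polar space is the rank of its quotient over its radical. *)

theory Defs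
  imports Main "HOL-Library.Set_Algebras"
begin

(* Right K-vector space V = type 'v :: ab_group_add with a right scalar *)
(* multiplication sm x \<lambda> = x\<lambda>.                                        *)

definition right_vector_space :: "('v::ab_group_add \<Rightarrow> 'k::division_ring \<Rightarrow> 'v) \<Rightarrow> bool" where
  "right_vector_space sm \<longleftrightarrow>
     (\<forall>x. sm x 1 = x) \<and>
     (\<forall>x a b. sm x (a * b) = sm (sm x a) b) \<and>
     (\<forall>x y a. sm (x + y) a = sm x a + sm y a) \<and>
     (\<forall>x a b. sm x (a + b) = sm x a + sm x b)"

definition anti_automorphism :: "('k::division_ring \<Rightarrow> 'k) \<Rightarrow> bool" where
  "anti_automorphism \<sigma> \<longleftrightarrow> bij \<sigma> \<and>
     (\<forall>a b. \<sigma> (a + b) = \<sigma> a + \<sigma> b) \<and>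
     (\<forall>a b. \<sigma> (a * b) = \<sigma> b * \<sigma> a)"

definition admissible :: "('k::division_ring \<Rightarrow> 'k) \<Rightarrow> 'k \<Rightarrow> bool" where
  "admissible \<sigma> \<epsilon> \<longleftrightarrow> anti_automorphism \<sigma> \<and> \<sigma> \<epsilon> * \<epsilon> = 1 \<and>
     (\<forall>t. \<sigma> (\<sigma> t) = \<epsilon> * t * inverse \<epsilon>)"

definition Ksig :: "('k::division_ring \<Rightarrow> 'k) \<Rightarrow> 'k \<Rightarrow> 'k set" where
  "Ksig \<sigma> \<epsilon> = {t - \<sigma> t * \<epsilon> | t. True}"

(* the class \<bar>t of t in \<bar>K^{\<sigma>,\<epsilon>} = K / K_{\<sigma>,\<epsilon>} (a coset, i.e. a subset of K) *)
definition kbar :: "('k::division_ring \<Rightarrow> 'k) \<Rightarrow> 'k \<Rightarrow> 'k \<Rightarrow> 'k set" where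
  "kbar \<sigma> \<epsilon> t = t +o Ksig \<sigma> \<epsilon>"

(* the group \<bar>K^{\<sigma>,\<epsilon>}, as the set of all classes; its addition is the
   pointwise sum of cosets (Set_Algebras) *)
definition Kbar :: "('k::division_ring \<Rightarrow> 'k) \<Rightarrow> 'k \<Rightarrow> 'k set set" where
  "Kbar \<sigma> \<epsilon> = range (kbar \<sigma> \<epsilon>)"

(* X \<circ> \<lambda> on \<bar>K: for X = \<bar>t this is \<bar>(\<lambda>^\<sigma> t \<lambda>) *)
definition circ :: "('k::division_ring \<Rightarrow> 'k) \<Rightarrow> 'k \<Rightarrow> 'k set \<Rightarrow> 'k \<Rightarrow> 'k set" where
  "circ \<sigma> \<epsilon> X l = (\<lambda>t. \<sigma> l * t * l) ` X + Ksig \<sigma> \<epsilon>"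

definition closed_subgroup :: "('k::division_ring \<Rightarrow> 'k) \<Rightarrow> 'k \<Rightarrow> 'k set set \<Rightarrow> bool" where
  "closed_subgroup \<sigma> \<epsilon> Rb \<longleftrightarrow>
     Rb \<subseteq> Kbar \<sigma> \<epsilon> \<and> kbar \<sigma> \<epsilon> 0 \<in> Rb \<and>
     (\<forall>s t. kbar \<sigma> \<epsilon> s \<in> Rb \<longrightarrow> kbar \<sigma> \<epsilon> t \<in> Rb \<longrightarrow> kbar \<sigma> \<epsilon> (s - t) \<in> Rb) \<and>
     (\<forall>X l. X \<in> Rb \<longrightarrow> circ \<sigma> \<epsilon> X l \<in> Rb)"

definition Kquot :: "('k::division_ring \<Rightarrow> 'k) \<Rightarrow> 'k \<Rightarrow> 'k set set \<Rightarrow> 'k set set set" where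
  "Kquot \<sigma> \<epsilon> Rb = {X +o Rb | X. X \<in> Kbar \<sigma> \<epsilon>}"

definition circq :: "('k::division_ring \<Rightarrow> 'k) \<Rightarrow> 'k \<Rightarrow> 'k set set \<Rightarrow> 'k set set \<Rightarrow> 'k \<Rightarrow> 'k set set" where
  "circq \<sigma> \<epsilon> Rb Q l = (\<lambda>X. circ \<sigma> \<epsilon> X l) ` Q + Rb"

definition trace_valued_sesquilinear ::
  "('v::ab_group_add \<Rightarrow> 'k::division_ring \<Rightarrow> 'v) \<Rightarrow> ('k \<Rightarrow> 'k) \<Rightarrow> 'k \<Rightarrow> ('v \<Rightarrow> 'v \<Rightarrow> 'k) \<Rightarrow> bool" where
  "trace_valued_sesquilinear sm \<sigma> \<epsilon> f \<longleftrightarrow>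
     (\<forall>x x' y. f (x + x') y = f x y + f x' y) \<and>
     (\<forall>x y y'. f x (y + y') = f x y + f x y') \<and>
     (\<forall>x y a b. f (sm x a) (sm y b) = \<sigma> a * f x y * b) \<and>
     (\<forall>x y. f y x = \<sigma> (f x y) * \<epsilon>) \<and>
     (\<forall>x. f x x \<in> {t + \<sigma> t * \<epsilon> | t. True})"

definition gen_quadratic_form ::
  "('v::ab_group_add \<Rightarrow> 'k::division_ring \<Rightarrow> 'v) \<Rightarrow> ('k \<Rightarrow> 'k) \<Rightarrow> 'k \<Rightarrow> 'k set set
     \<Rightarrow> ('v \<Rightarrow> 'k set set) \<Rightarrow> bool" where
  "gen_quadratic_form sm \<sigma> \<epsilon> Rb q \<longleftrightarrow>
     closed_subgroup \<sigma> \<epsilon> Rb \<and>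
     (\<forall>x. q x \<in> Kquot \<sigma> \<epsilon> Rb) \<and>
     (\<forall>x l. q (sm x l) = circq \<sigma> \<epsilon> Rb (q x) l) \<and>
     (\<exists>f. trace_valued_sesquilinear sm \<sigma> \<epsilon> f \<and>
          (\<forall>x y. q (x + y) = q x + q y + (kbar \<sigma> \<epsilon> (f x y) +o Rb)))"

(* non-trivial: q is not identically \<bar>R (the zero of the quotient) *)
definition nontrivial_qform :: "('v \<Rightarrow> 'k set set) \<Rightarrow> 'k set set \<Rightarrow> bool" where
  "nontrivial_qform q Rb \<longleftrightarrow> (\<exists>x. q x \<noteq> Rb)"

(* Projective space PG(V): points are 1-dimensional subspaces.         *)

definition pt :: "('v \<Rightarrow> 'k \<Rightarrow> 'v) \<Rightarrow> 'v \<Rightarrow> 'v set" where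
  "pt sm x = range (sm x)"

definition pline :: "('v::ab_group_add \<Rightarrow> 'k::division_ring \<Rightarrow> 'v) \<Rightarrow> 'v \<Rightarrow> 'v \<Rightarrow> 'v set set" where
  "pline sm x y = {pt sm (sm x a + sm y b) | a b. sm x a + sm y b \<noteq> 0}"

definition Sq_points :: "('v::ab_group_add \<Rightarrow> 'k::division_ring \<Rightarrow> 'v) \<Rightarrow> ('v \<Rightarrow> 'k set set) \<Rightarrow> 'k set set
     \<Rightarrow> 'v set set" where
  "Sq_points sm q Rb = {pt sm x | x. x \<noteq> 0 \<and> q x = Rb}"

definition Sq_lines :: "('v::ab_group_add \<Rightarrow> 'k::division_ring \<Rightarrow> 'v) \<Rightarrow> ('v \<Rightarrow> 'k set set) \<Rightarrow> 'k set set
     \<Rightarrow> 'v set set set" where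
  "Sq_lines sm q Rb = {pline sm x y | x y. x \<noteq> 0 \<and> y \<noteq> 0 \<and> pt sm x \<noteq> pt sm y \<and>
                                          pline sm x y \<subseteq> Sq_points sm q Rb}"

definition Sq :: "('v::ab_group_add \<Rightarrow> 'k::division_ring \<Rightarrow> 'v) \<Rightarrow> ('v \<Rightarrow> 'k set set) \<Rightarrow> 'k set set
     \<Rightarrow> 'v set set \<times> 'v set set set" where
  "Sq sm q Rb = (Sq_points sm q Rb, Sq_lines sm q Rb)"

definition collinear :: "'p set set \<Rightarrow> 'p \<Rightarrow> 'p \<Rightarrow> bool" where
  "collinear L p r \<longleftrightarrow> p = r \<or> (\<exists>l\<in>L. p \<in> l \<and> r \<in> l)"

definition radical :: "'p set \<Rightarrow> 'p set set \<Rightarrow> 'p set" where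
  "radical P L = {p \<in> P. \<forall>r\<in>P. collinear L p r}"

definition subspace :: "'p set \<Rightarrow> 'p set set \<Rightarrow> 'p set \<Rightarrow> bool" where
  "subspace P L X \<longleftrightarrow> X \<subseteq> P \<and> (\<forall>l\<in>L. card (l \<inter> X) \<ge> 2 \<or> infinite (l \<inter> X) \<longrightarrow> l \<subseteq> X)"

definition singular_subspace :: "'p set \<Rightarrow> 'p set set \<Rightarrow> 'p set \<Rightarrow> bool" where
  "singular_subspace P L X \<longleftrightarrow> subspace P L X \<and> (\<forall>p\<in>X. \<forall>r\<in>X. collinear L p r)"

definition gen_subspace :: "'p set \<Rightarrow> 'p set set \<Rightarrow> 'p set \<Rightarrow> 'p set" where
  "gen_subspace P L A = \<Inter>{X. subspace P L X \<and> A \<subseteq> X}"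

(* quotient geometry S/Rad(S): points <Rad,p> (p not in Rad), lines <Rad,l>
   (l disjoint from Rad), the latter viewed as sets of quotient points *)
definition quot_points :: "'p set \<Rightarrow> 'p set set \<Rightarrow> 'p set set" where
  "quot_points P L = {gen_subspace P L (radical P L \<union> {p}) | p. p \<in> P - radical P L}"

definition quot_lines :: "'p set \<Rightarrow> 'p set set \<Rightarrow> 'p set set set" where
  "quot_lines P L = {{Q \<in> quot_points P L. Q \<subseteq> gen_subspace P L (radical P L \<union> l)} | l.
                      l \<in> L \<and> l \<inter> radical P L = {}}"

definition rank_ge2 :: "'p set \<Rightarrow> 'p set set \<Rightarrow> bool" where
  "rank_ge2 P L \<longleftrightarrow> (\<exists>X0 X1. singular_subspace P L X0 \<and> singular_subspace P L X1 \<and>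
                                {} \<subset> X0 \<and> X0 \<subset> X1)"

definition nondeg_rank_ge2 :: "'p set \<times> 'p set set \<Rightarrow> bool" where
  "nondeg_rank_ge2 S \<longleftrightarrow> rank_ge2 (quot_points (fst S) (snd S)) (quot_lines (fst S) (snd S))"

end

theory Submission imports Defs begin

(* Lift q to Q : V -> K with q x = bar(Q x) + bar R, and bar R to its preimage R in K (called
   codefect below); the singular vectors are those with Q x in R. For singular y, w one has
   f(y,w) = 0 iff all of <y,w> is singular, so the two forms have the same orthogonality relation on
   singular vectors. A line of S missing the radical yields singular vectors a, b, c, d with
   f1(a,c) = f1(b,d) = 1 and all other mixed values 0. With kappa = f2(a,c), comparing orthogonality
   of a + b l and c + d m forces sigma2 = kappa sigma1 kappa^-1; comparing singularity of a t + c
   gives R2 = kappa R1 and then epsilon2; finally every x becomes singular after adding a suitable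
   combination of a and c, which shows Q2 x = kappa Q1 x modulo R2. *)

lemma inverse_mult_cancel_left: "(g::'k::division_ring) \<noteq> 0 \<Longrightarrow> inverse g * (g * x) = x"
  by (simp add: mult.assoc[symmetric])

lemma mult_inverse_cancel_left: "(g::'k::division_ring) \<noteq> 0 \<Longrightarrow> g * (inverse g * x) = x"
  by (simp add: mult.assoc[symmetric])

lemma image_elt_set_plus_additive:
  assumes "\<And>x y. h (x + y) = h x + h y"
  shows "h ` (a +o C) = h a +o h ` C"
proof -
  have "h ` (a +o C) = (\<lambda>c. h (a + c)) ` C" by (auto simp: elt_set_plus_def)
  also have "\<dots> = (\<lambda>c. h a + h c) ` C" using assms by simp
  also have "\<dots> = h a +o h ` C" by (auto simp: elt_set_plus_def)
  finally show ?thesis .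
qed

lemma image_mult_set_plus:
  "(\<lambda>k. (c::'k::ring) * k) ` (A + B) = (\<lambda>k. c * k) ` A + (\<lambda>k. c * k) ` B"
proof -
  have "(\<lambda>k. c * k) ` X = c *o X" for X by (auto simp: elt_set_times_def)
  then show ?thesis by (simp add: set_times_plus_distrib2)
qed

section \<open>Anti-automorphisms and admissible pairs\<close>

locale anti_aut =
  fixes \<sigma> :: "'k::division_ring \<Rightarrow> 'k"
  assumes anti_automorphism: "anti_automorphism \<sigma>"
begin

lemma add [simp]: "\<sigma> (a + b) = \<sigma> a + \<sigma> b"
  using anti_automorphism by (simp add: anti_automorphism_def)

lemma mult [simp]: "\<sigma> (a * b) = \<sigma> b * \<sigma> a"
  using anti_automorphism by (simp add: anti_automorphism_def)

lemma eq_iff [simp]: "\<sigma> a = \<sigma> b \<longleftrightarrow> a = b"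
  using anti_automorphism by (simp add: anti_automorphism_def bij_def inj_eq)

lemma surj: "\<exists>b. \<sigma> b = a"
  using anti_automorphism by (metis anti_automorphism_def bij_pointE)

lemma zero [simp]: "\<sigma> 0 = 0"
  using add[of 0 0] by simp

lemma zero_iff [simp]: "\<sigma> a = 0 \<longleftrightarrow> a = 0"
  using eq_iff[of a 0] by simp

lemma minus [simp]: "\<sigma> (- a) = - \<sigma> a"
  using add[of a "- a"] by (simp add: minus_unique)

lemma one [simp]: "\<sigma> 1 = 1"
  using mult[of 1 1] zero_iff[of 1] by (metis mult_cancel_right2)

lemma inverse [simp]: "\<sigma> (inverse a) = inverse (\<sigma> a)"
proof (cases "a = 0")
  case False
  then have "\<sigma> a * \<sigma> (inverse a) = 1" using mult[of "inverse a" a] by simp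
  then show ?thesis using False by (metis inverse_unique)
qed simp

lemma Ksig_image_mult:
  assumes "\<kappa> \<noteq> 0"
  shows "(\<lambda>k. \<kappa> * k) ` Ksig \<sigma> \<epsilon> = Ksig (\<lambda>t. \<kappa> * \<sigma> t * inverse \<kappa>) (\<kappa> * \<sigma> (inverse \<kappa>) * \<epsilon>)"
    (is "_ = Ksig ?\<sigma>' ?\<epsilon>'")
proof -
  have trace: "\<kappa> * (t - \<sigma> t * \<epsilon>) = \<kappa> * t - ?\<sigma>' (\<kappa> * t) * ?\<epsilon>'" for t
    using assms
    by (simp add: mult.assoc right_diff_distrib inverse_mult_cancel_left mult_inverse_cancel_left)
  show ?thesis
  proof
    show "(\<lambda>k. \<kappa> * k) ` Ksig \<sigma> \<epsilon> \<subseteq> Ksig ?\<sigma>' ?\<epsilon>'"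
      unfolding Ksig_def by (auto simp only: trace)
    show "Ksig ?\<sigma>' ?\<epsilon>' \<subseteq> (\<lambda>k. \<kappa> * k) ` Ksig \<sigma> \<epsilon>"
    proof
      fix u assume "u \<in> Ksig ?\<sigma>' ?\<epsilon>'"
      then obtain t where "u = t - ?\<sigma>' t * ?\<epsilon>'" unfolding Ksig_def by blast
      then have "u = \<kappa> * (inverse \<kappa> * t - \<sigma> (inverse \<kappa> * t) * \<epsilon>)"
        using trace[of "inverse \<kappa> * t"] by (simp add: mult_inverse_cancel_left[OF assms])
      then show "u \<in> (\<lambda>k. \<kappa> * k) ` Ksig \<sigma> \<epsilon>" unfolding Ksig_def by blast
    qed
  qed
qed

end

locale admissible_pair = anti_aut \<sigma> for \<sigma> :: "'k::division_ring \<Rightarrow> 'k" +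
  fixes \<epsilon> :: 'k
  assumes admissible: "admissible \<sigma> \<epsilon>"
begin

lemma sigma_sigma: "\<sigma> (\<sigma> t) = \<epsilon> * t * inverse \<epsilon>"
  using admissible by (simp add: admissible_def)

lemma epsilon_nonzero: "\<epsilon> \<noteq> 0"
  using admissible by (auto simp: admissible_def)

lemma sigma_sigma_mult_epsilon: "\<sigma> (\<sigma> t) * \<epsilon> = \<epsilon> * t"
  using epsilon_nonzero by (simp add: sigma_sigma mult.assoc)

lemma Ksig_trace: "t - \<sigma> t * \<epsilon> \<in> Ksig \<sigma> \<epsilon>"
  unfolding Ksig_def by auto

lemma Ksig_zero: "0 \<in> Ksig \<sigma> \<epsilon>"
  using Ksig_trace[of 0] by simp

lemma Ksig_add: "s \<in> Ksig \<sigma> \<epsilon> \<Longrightarrow> t \<in> Ksig \<sigma> \<epsilon> \<Longrightarrow> s + t \<in> Ksig \<sigma> \<epsilon>"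
proof -
  assume "s \<in> Ksig \<sigma> \<epsilon>" "t \<in> Ksig \<sigma> \<epsilon>"
  then obtain a b where "s = a - \<sigma> a * \<epsilon>" "t = b - \<sigma> b * \<epsilon>" unfolding Ksig_def by auto
  then have "s + t = (a + b) - \<sigma> (a + b) * \<epsilon>" by (simp only:) (simp add: algebra_simps)
  then show ?thesis using Ksig_trace by metis
qed

lemma Ksig_uminus: "s \<in> Ksig \<sigma> \<epsilon> \<Longrightarrow> - s \<in> Ksig \<sigma> \<epsilon>"
proof -
  assume "s \<in> Ksig \<sigma> \<epsilon>"
  then obtain a where "s = a - \<sigma> a * \<epsilon>" unfolding Ksig_def by auto
  then have "- s = (- a) - \<sigma> (- a) * \<epsilon>" by (simp add: algebra_simps)
  then show ?thesis using Ksig_trace by metis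
qed

lemma Ksig_diff: "s \<in> Ksig \<sigma> \<epsilon> \<Longrightarrow> t \<in> Ksig \<sigma> \<epsilon> \<Longrightarrow> s - t \<in> Ksig \<sigma> \<epsilon>"
  using Ksig_add[OF _ Ksig_uminus, of s t] by simp

lemma Ksig_conj: "s \<in> Ksig \<sigma> \<epsilon> \<Longrightarrow> \<sigma> l * s * l \<in> Ksig \<sigma> \<epsilon>"
proof -
  assume "s \<in> Ksig \<sigma> \<epsilon>"
  then obtain t where s: "s = t - \<sigma> t * \<epsilon>" unfolding Ksig_def by auto
  have "\<sigma> l * s * l = \<sigma> l * t * l - \<sigma> (\<sigma> l * t * l) * \<epsilon>"
    by (simp add: s sigma_sigma_mult_epsilon algebra_simps)
  then show ?thesis using Ksig_trace by metis
qed

lemma mem_kbar_iff: "u \<in> kbar \<sigma> \<epsilon> t \<longleftrightarrow> u - t \<in> Ksig \<sigma> \<epsilon>"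
  unfolding kbar_def by (simp add: set_minus_plus)

lemma kbar_eq_iff: "kbar \<sigma> \<epsilon> s = kbar \<sigma> \<epsilon> t \<longleftrightarrow> s - t \<in> Ksig \<sigma> \<epsilon>"
proof
  assume "kbar \<sigma> \<epsilon> s = kbar \<sigma> \<epsilon> t"
  moreover have "s \<in> kbar \<sigma> \<epsilon> s" using Ksig_zero by (simp add: mem_kbar_iff)
  ultimately show "s - t \<in> Ksig \<sigma> \<epsilon>" by (simp add: mem_kbar_iff)
next
  assume st: "s - t \<in> Ksig \<sigma> \<epsilon>"
  show "kbar \<sigma> \<epsilon> s = kbar \<sigma> \<epsilon> t"
  proof (auto simp: mem_kbar_iff)
    fix u assume "u - s \<in> Ksig \<sigma> \<epsilon>"
    from Ksig_add[OF this st] show "u - t \<in> Ksig \<sigma> \<epsilon>" by simp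
  next
    fix u assume "u - t \<in> Ksig \<sigma> \<epsilon>"
    from Ksig_diff[OF this st] show "u - s \<in> Ksig \<sigma> \<epsilon>" by simp
  qed
qed

lemma kbar_add: "kbar \<sigma> \<epsilon> s + kbar \<sigma> \<epsilon> t = kbar \<sigma> \<epsilon> (s + t)"
proof -
  have "Ksig \<sigma> \<epsilon> + Ksig \<sigma> \<epsilon> = Ksig \<sigma> \<epsilon>"
  proof
    show "Ksig \<sigma> \<epsilon> + Ksig \<sigma> \<epsilon> \<subseteq> Ksig \<sigma> \<epsilon>" by (auto elim!: set_plus_elim intro: Ksig_add)
    show "Ksig \<sigma> \<epsilon> \<subseteq> Ksig \<sigma> \<epsilon> + Ksig \<sigma> \<epsilon>" using Ksig_zero by (metis add_0 set_plus_intro subsetI)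
  qed
  then show ?thesis by (simp add: kbar_def set_plus_rearrange)
qed

lemma circ_kbar: "circ \<sigma> \<epsilon> (kbar \<sigma> \<epsilon> t) l = kbar \<sigma> \<epsilon> (\<sigma> l * t * l)"
proof (auto simp: circ_def mem_kbar_iff elim!: set_plus_elim)
  fix u k assume u: "u - t \<in> Ksig \<sigma> \<epsilon>" and k: "k \<in> Ksig \<sigma> \<epsilon>"
  have "\<sigma> l * u * l + k - \<sigma> l * t * l = \<sigma> l * (u - t) * l + k" by (simp add: algebra_simps)
  then show "\<sigma> l * u * l + k - \<sigma> l * t * l \<in> Ksig \<sigma> \<epsilon>"
    using Ksig_add[OF Ksig_conj[OF u] k] by (simp only:)
next
  fix u assume "u - \<sigma> l * t * l \<in> Ksig \<sigma> \<epsilon>"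
  moreover have "\<sigma> l * t * l \<in> (\<lambda>s. \<sigma> l * s * l) ` kbar \<sigma> \<epsilon> t" using Ksig_zero by (auto simp: mem_kbar_iff)
  ultimately show "u \<in> (\<lambda>s. \<sigma> l * s * l) ` kbar \<sigma> \<epsilon> t + Ksig \<sigma> \<epsilon>"
    by (metis add.commute diff_add_cancel set_plus_intro)
qed

end

section \<open>Right vector spaces and points\<close>

locale right_vs =
  fixes sm :: "'v::ab_group_add \<Rightarrow> 'k::division_ring \<Rightarrow> 'v"
  assumes right_vector_space: "right_vector_space sm"
begin

lemma sm_one [simp]: "sm x 1 = x"
  using right_vector_space unfolding right_vector_space_def by blast

lemma sm_mult: "sm x (a * b) = sm (sm x a) b"
  using right_vector_space unfolding right_vector_space_def by blast

lemma sm_add_right: "sm x (a + b) = sm x a + sm x b"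
  using right_vector_space unfolding right_vector_space_def by blast

lemma sm_zero_right [simp]: "sm x 0 = 0"
  using sm_add_right[of x 0 0] by simp

lemma sm_minus_right: "sm x (- a) = - sm x a"
  using sm_add_right[of x a "- a"] by (simp add: minus_unique)

lemma mem_pt_self: "x \<in> pt sm x"
  unfolding pt_def by (metis rangeI sm_one)

lemma pt_sm: "l \<noteq> 0 \<Longrightarrow> pt sm (sm x l) = pt sm x"
  unfolding pt_def
  by (auto simp: sm_mult[symmetric] image_iff)
    (metis mult_inverse_cancel_left sm_mult)

lemma pt_eq_imp_sm: "pt sm x = pt sm y \<Longrightarrow> \<exists>l. x = sm y l"
  using mem_pt_self[of x] unfolding pt_def by auto

lemma mem_pline_left: "x \<noteq> 0 \<Longrightarrow> pt sm x \<in> pline sm x z"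
  unfolding pline_def by (rule CollectI, rule exI[of _ 1], rule exI[of _ 0]) simp

lemma mem_pline_right: "z \<noteq> 0 \<Longrightarrow> pt sm z \<in> pline sm x z"
  unfolding pline_def by (rule CollectI, rule exI[of _ 0], rule exI[of _ 1]) simp

end

section \<open>Generalized quadratic forms\<close>

locale gen_qform = right_vs sm + admissible_pair \<sigma> \<epsilon>
  for sm :: "'v::ab_group_add \<Rightarrow> 'k::division_ring \<Rightarrow> 'v" and \<sigma> \<epsilon> +
  fixes Rb :: "'k set set" and q :: "'v \<Rightarrow> 'k set set"
  assumes gen_quadratic_form: "gen_quadratic_form sm \<sigma> \<epsilon> Rb q"
begin

definition fq :: "'v \<Rightarrow> 'v \<Rightarrow> 'k" where
  "fq = (SOME f. trace_valued_sesquilinear sm \<sigma> \<epsilon> f \<and>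
          (\<forall>x y. q (x + y) = q x + q y + (kbar \<sigma> \<epsilon> (f x y) +o Rb)))"

lemma fq_spec:
  "trace_valued_sesquilinear sm \<sigma> \<epsilon> fq \<and> (\<forall>x y. q (x + y) = q x + q y + (kbar \<sigma> \<epsilon> (fq x y) +o Rb))"
proof -
  have "\<exists>f. trace_valued_sesquilinear sm \<sigma> \<epsilon> f \<and> (\<forall>x y. q (x + y) = q x + q y + (kbar \<sigma> \<epsilon> (f x y) +o Rb))"
    using gen_quadratic_form by (simp add: gen_quadratic_form_def)
  then show ?thesis unfolding fq_def by (rule someI_ex)
qed

lemma fq_add_left: "fq (x + x') y = fq x y + fq x' y"
  using fq_spec unfolding trace_valued_sesquilinear_def by blast

lemma fq_add_right: "fq x (y + y') = fq x y + fq x y'"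
  using fq_spec unfolding trace_valued_sesquilinear_def by blast

lemma fq_sm: "fq (sm x a) (sm y b) = \<sigma> a * fq x y * b"
  using fq_spec unfolding trace_valued_sesquilinear_def by blast

lemma fq_swap: "fq y x = \<sigma> (fq x y) * \<epsilon>"
  using fq_spec unfolding trace_valued_sesquilinear_def by blast

lemma q_add: "q (x + y) = q x + q y + (kbar \<sigma> \<epsilon> (fq x y) +o Rb)"
  using fq_spec by blast

lemma fq_sm_left: "fq (sm x a) y = \<sigma> a * fq x y"
  using fq_sm[of x a y 1] by simp

lemma fq_sm_right: "fq x (sm y b) = fq x y * b"
  using fq_sm[of x 1 y b] by simp

lemma fq_swap_zero_iff: "fq y x = 0 \<longleftrightarrow> fq x y = 0"
  using fq_swap[of y x] epsilon_nonzero by simp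

definition codefect :: "'k set" where
  "codefect = {t. kbar \<sigma> \<epsilon> t \<in> Rb}"

lemma closed_subgroup: "closed_subgroup \<sigma> \<epsilon> Rb"
  using gen_quadratic_form by (simp add: gen_quadratic_form_def)

lemma codefect_zero: "0 \<in> codefect"
  using closed_subgroup by (simp add: closed_subgroup_def codefect_def)

lemma codefect_diff: "s \<in> codefect \<Longrightarrow> t \<in> codefect \<Longrightarrow> s - t \<in> codefect"
  using closed_subgroup by (simp add: closed_subgroup_def codefect_def)

lemma codefect_add: "s \<in> codefect \<Longrightarrow> t \<in> codefect \<Longrightarrow> s + t \<in> codefect"
  using codefect_diff[of s "- t"] codefect_diff[OF codefect_zero, of t] by simp

lemma Ksig_subset_codefect: "Ksig \<sigma> \<epsilon> \<subseteq> codefect"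
proof
  fix k assume "k \<in> Ksig \<sigma> \<epsilon>"
  then have "kbar \<sigma> \<epsilon> k = kbar \<sigma> \<epsilon> 0" by (simp add: kbar_eq_iff)
  then show "k \<in> codefect" using codefect_zero by (simp add: codefect_def)
qed

lemma codefect_conj: "t \<in> codefect \<Longrightarrow> \<sigma> l * t * l \<in> codefect"
  using closed_subgroup by (auto simp: closed_subgroup_def codefect_def circ_kbar[symmetric])

lemma mem_Rb_iff: "Y \<in> Rb \<longleftrightarrow> (\<exists>r\<in>codefect. Y = kbar \<sigma> \<epsilon> r)"
  using closed_subgroup by (auto simp: closed_subgroup_def codefect_def Kbar_def)

lemma image_kbar_codefect: "kbar \<sigma> \<epsilon> ` codefect = Rb"
  using mem_Rb_iff by blast

lemma codefect_shift:
  assumes "s - t \<in> codefect"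
  shows "s \<in> codefect \<longleftrightarrow> t \<in> codefect"
  using codefect_diff[OF _ assms] codefect_add[OF assms] by force

lemma mem_coset_iff: "X \<in> kbar \<sigma> \<epsilon> s +o Rb \<longleftrightarrow> (\<exists>u. X = kbar \<sigma> \<epsilon> u \<and> u - s \<in> codefect)"
proof
  assume "X \<in> kbar \<sigma> \<epsilon> s +o Rb"
  then obtain Y where "Y \<in> Rb" "X = kbar \<sigma> \<epsilon> s + Y" by (auto simp: elt_set_plus_def)
  moreover from \<open>Y \<in> Rb\<close> obtain r where "r \<in> codefect" "Y = kbar \<sigma> \<epsilon> r"
    unfolding mem_Rb_iff by blast
  ultimately have "X = kbar \<sigma> \<epsilon> (s + r) \<and> (s + r) - s \<in> codefect" by (simp add: kbar_add)
  then show "\<exists>u. X = kbar \<sigma> \<epsilon> u \<and> u - s \<in> codefect" by blast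
next
  assume "\<exists>u. X = kbar \<sigma> \<epsilon> u \<and> u - s \<in> codefect"
  then obtain u where u: "X = kbar \<sigma> \<epsilon> u" "u - s \<in> codefect" by blast
  have "X = kbar \<sigma> \<epsilon> s + kbar \<sigma> \<epsilon> (u - s)" using u(1) by (simp add: kbar_add)
  moreover have "kbar \<sigma> \<epsilon> (u - s) \<in> Rb" using u(2) by (simp add: codefect_def)
  ultimately show "X \<in> kbar \<sigma> \<epsilon> s +o Rb" unfolding elt_set_plus_def by blast
qed

lemma coset_eq_iff: "kbar \<sigma> \<epsilon> s +o Rb = kbar \<sigma> \<epsilon> t +o Rb \<longleftrightarrow> s - t \<in> codefect"
proof
  assume eq: "kbar \<sigma> \<epsilon> s +o Rb = kbar \<sigma> \<epsilon> t +o Rb"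
  have "kbar \<sigma> \<epsilon> s \<in> kbar \<sigma> \<epsilon> s +o Rb" using codefect_zero by (auto simp: mem_coset_iff)
  then obtain u where "kbar \<sigma> \<epsilon> s = kbar \<sigma> \<epsilon> u" "u - t \<in> codefect"
    unfolding eq mem_coset_iff by blast
  then show "s - t \<in> codefect"
    using codefect_add[of "s - u" "u - t"] Ksig_subset_codefect by (auto simp: kbar_eq_iff)
next
  assume st: "s - t \<in> codefect"
  have "u - s \<in> codefect \<longleftrightarrow> u - t \<in> codefect" for u
    using codefect_shift[of "u - t" "u - s"] st by (simp add: algebra_simps)
  then show "kbar \<sigma> \<epsilon> s +o Rb = kbar \<sigma> \<epsilon> t +o Rb" by (auto simp: mem_coset_iff)
qed

lemma coset_zero: "kbar \<sigma> \<epsilon> 0 +o Rb = Rb"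
  by (auto simp: mem_coset_iff mem_Rb_iff)

lemma set_plus_Rb: "Rb + Rb = Rb"
proof
  show "Rb + Rb \<subseteq> Rb"
  proof
    fix X assume "X \<in> Rb + Rb"
    then obtain r r' where "r \<in> codefect" "r' \<in> codefect" "X = kbar \<sigma> \<epsilon> r + kbar \<sigma> \<epsilon> r'"
      by (auto simp: mem_Rb_iff elim!: set_plus_elim)
    then show "X \<in> Rb" using codefect_add by (auto simp: mem_Rb_iff kbar_add)
  qed
  show "Rb \<subseteq> Rb + Rb"
  proof
    fix X assume "X \<in> Rb"
    moreover have "kbar \<sigma> \<epsilon> 0 \<in> Rb" using codefect_zero by (auto simp: mem_Rb_iff)
    ultimately show "X \<in> Rb + Rb" using set_plus_intro[of "kbar \<sigma> \<epsilon> 0" Rb X Rb]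
      by (auto simp: mem_Rb_iff kbar_add)
  qed
qed

lemma coset_add: "(kbar \<sigma> \<epsilon> s +o Rb) + (kbar \<sigma> \<epsilon> t +o Rb) = kbar \<sigma> \<epsilon> (s + t) +o Rb"
  by (simp add: set_plus_rearrange kbar_add set_plus_Rb)

lemma circq_coset: "circq \<sigma> \<epsilon> Rb (kbar \<sigma> \<epsilon> t +o Rb) l = kbar \<sigma> \<epsilon> (\<sigma> l * t * l) +o Rb"
proof (rule set_eqI)
  fix X
  show "X \<in> circq \<sigma> \<epsilon> Rb (kbar \<sigma> \<epsilon> t +o Rb) l \<longleftrightarrow> X \<in> kbar \<sigma> \<epsilon> (\<sigma> l * t * l) +o Rb"
  proof
    assume "X \<in> circq \<sigma> \<epsilon> Rb (kbar \<sigma> \<epsilon> t +o Rb) l"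
    then obtain A B where "A \<in> kbar \<sigma> \<epsilon> t +o Rb" "B \<in> Rb" "X = circ \<sigma> \<epsilon> A l + B"
      unfolding circq_def by (auto elim!: set_plus_elim)
    then obtain u r where u: "u - t \<in> codefect" and r: "r \<in> codefect"
      and X: "X = kbar \<sigma> \<epsilon> (\<sigma> l * u * l + r)"
      by (auto simp: mem_coset_iff mem_Rb_iff circ_kbar kbar_add)
    have "\<sigma> l * u * l + r - \<sigma> l * t * l = \<sigma> l * (u - t) * l + r" by (simp add: algebra_simps)
    then have "\<sigma> l * u * l + r - \<sigma> l * t * l \<in> codefect"
      using codefect_add[OF codefect_conj[OF u] r] by (simp only:)
    then show "X \<in> kbar \<sigma> \<epsilon> (\<sigma> l * t * l) +o Rb" unfolding mem_coset_iff X by blast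
  next
    assume "X \<in> kbar \<sigma> \<epsilon> (\<sigma> l * t * l) +o Rb"
    then obtain u where u: "X = kbar \<sigma> \<epsilon> u" "u - \<sigma> l * t * l \<in> codefect" by (auto simp: mem_coset_iff)
    have "kbar \<sigma> \<epsilon> t \<in> kbar \<sigma> \<epsilon> t +o Rb" using codefect_zero unfolding mem_coset_iff by auto
    then have "circ \<sigma> \<epsilon> (kbar \<sigma> \<epsilon> t) l \<in> (\<lambda>X. circ \<sigma> \<epsilon> X l) ` (kbar \<sigma> \<epsilon> t +o Rb)"
      by (rule imageI)
    moreover have "kbar \<sigma> \<epsilon> (u - \<sigma> l * t * l) \<in> Rb" using u(2) by (simp add: codefect_def)
    moreover have "X = circ \<sigma> \<epsilon> (kbar \<sigma> \<epsilon> t) l + kbar \<sigma> \<epsilon> (u - \<sigma> l * t * l)"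
      using u by (simp add: circ_kbar kbar_add)
    ultimately show "X \<in> circq \<sigma> \<epsilon> Rb (kbar \<sigma> \<epsilon> t +o Rb) l"
      unfolding circq_def by auto
  qed
qed

definition Q :: "'v \<Rightarrow> 'k" where
  "Q x = (SOME t. q x = kbar \<sigma> \<epsilon> t +o Rb)"

lemma q_eq_coset_Q: "q x = kbar \<sigma> \<epsilon> (Q x) +o Rb"
proof -
  have "q x \<in> Kquot \<sigma> \<epsilon> Rb" using gen_quadratic_form by (simp add: gen_quadratic_form_def)
  then have "\<exists>t. q x = kbar \<sigma> \<epsilon> t +o Rb" by (auto simp: Kquot_def Kbar_def)
  then show ?thesis unfolding Q_def by (rule someI_ex)
qed

lemma Q_sm_congr: "Q (sm x l) - \<sigma> l * Q x * l \<in> codefect"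
proof -
  have "q (sm x l) = circq \<sigma> \<epsilon> Rb (q x) l"
    using gen_quadratic_form by (simp add: gen_quadratic_form_def)
  then show ?thesis by (simp add: q_eq_coset_Q circq_coset coset_eq_iff)
qed

lemma Q_add_congr: "Q (x + y) - (Q x + Q y + fq x y) \<in> codefect"
  using q_add[of x y] by (simp add: q_eq_coset_Q coset_add coset_eq_iff)

lemma q_eq_Rb_iff: "q x = Rb \<longleftrightarrow> Q x \<in> codefect"
  using coset_eq_iff[of "Q x" 0] by (simp add: q_eq_coset_Q coset_zero)

lemma codefect_proper: "nontrivial_qform q Rb \<Longrightarrow> codefect \<noteq> UNIV"
  by (auto simp: nontrivial_qform_def q_eq_Rb_iff)

abbreviation singular :: "'v \<Rightarrow> bool" where
  "singular x \<equiv> Q x \<in> codefect"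

lemma singular_zero: "singular 0"
  using Q_sm_congr[of 0 0] by simp

lemma singular_sm: "singular x \<Longrightarrow> singular (sm x l)"
  using codefect_shift[OF Q_sm_congr[of x l]] codefect_conj by blast

lemma Q_comb_congr:
  "Q (sm y a + sm w b) - (\<sigma> a * Q y * a + \<sigma> b * Q w * b + \<sigma> a * fq y w * b) \<in> codefect"
proof -
  have "(Q (sm y a + sm w b) - (Q (sm y a) + Q (sm w b) + fq (sm y a) (sm w b)))
        + (Q (sm y a) - \<sigma> a * Q y * a) + (Q (sm w b) - \<sigma> b * Q w * b) \<in> codefect"
    by (intro codefect_add Q_add_congr Q_sm_congr)
  then show ?thesis by (simp add: fq_sm algebra_simps)
qed

lemma Q_comb_singular_congr:
  assumes "singular y" "singular w"
  shows "Q (sm y a + sm w b) - \<sigma> a * fq y w * b \<in> codefect"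
proof -
  have "(Q (sm y a + sm w b) - (\<sigma> a * Q y * a + \<sigma> b * Q w * b + \<sigma> a * fq y w * b))
     + (\<sigma> a * Q y * a + \<sigma> b * Q w * b) \<in> codefect"
    using assms by (intro codefect_add Q_comb_congr codefect_conj)
  then show ?thesis by (simp add: algebra_simps)
qed

lemma singular_comb_if_orth:
  "singular y \<Longrightarrow> singular w \<Longrightarrow> fq y w = 0 \<Longrightarrow> singular (sm y a + sm w b)"
  using Q_comb_singular_congr[of y w a b] by simp

lemma Q_add_comb_congr:
  assumes "singular w1" "singular w2"
  shows "Q (x + (sm w1 s + sm w2 t)) - (Q x + \<sigma> s * fq w1 w2 * t + fq x w1 * s + fq x w2 * t)
    \<in> codefect"
proof -
  have "(Q (x + (sm w1 s + sm w2 t)) - (Q x + Q (sm w1 s + sm w2 t) + fq x (sm w1 s + sm w2 t)))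
     + (Q (sm w1 s + sm w2 t) - \<sigma> s * fq w1 w2 * t) \<in> codefect"
    using assms by (intro codefect_add Q_add_congr Q_comb_singular_congr)
  then show ?thesis by (simp add: fq_add_right fq_sm_right algebra_simps)
qed

end

locale nontrivial_gen_qform = gen_qform +
  assumes nontrivial: "nontrivial_qform q Rb"
begin

lemma orth_iff_span_singular:
  assumes y: "singular y" and w: "singular w"
  shows "fq y w = 0 \<longleftrightarrow> (\<forall>a b. singular (sm y a + sm w b))"
proof
  assume "fq y w = 0"
  then show "\<forall>a b. singular (sm y a + sm w b)" using singular_comb_if_orth[OF y w] by blast
next
  assume all: "\<forall>a b. singular (sm y a + sm w b)"
  obtain s where s: "s \<notin> codefect" using codefect_proper[OF nontrivial] by blast
  show "fq y w = 0"
  proof (rule ccontr)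
    \<comment> \<open>rescale w so that f(y, w) becomes an element s outside the codefect\<close>
    assume ne: "fq y w \<noteq> 0"
    have "Q (sm y 1 + sm w (inverse (fq y w) * s)) - \<sigma> 1 * fq y w * (inverse (fq y w) * s) \<in> codefect"
      by (rule Q_comb_singular_congr[OF y w])
    then have "Q (sm y 1 + sm w (inverse (fq y w) * s)) - s \<in> codefect"
      using ne by (simp add: mult.assoc[symmetric])
    then show False using all s codefect_shift by blast
  qed
qed

lemma fq_singular_self: "singular y \<Longrightarrow> fq y y = 0"
  using orth_iff_span_singular[of y y] singular_sm[of y] by (simp add: sm_add_right[symmetric])

end

section \<open>Hyperbolic frames in the polar space\<close>

context gen_qform
begin

abbreviation points :: "'v set set" where
  "points \<equiv> Sq_points sm q Rb"

abbreviation lines :: "'v set set set" where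
  "lines \<equiv> Sq_lines sm q Rb"

lemma singular_iff_point: "singular x \<longleftrightarrow> x = 0 \<or> pt sm x \<in> points"
proof -
  have "singular x" if "pt sm x = pt sm y" "q y = Rb" for y
    using that pt_eq_imp_sm singular_sm by (metis q_eq_Rb_iff)
  then show ?thesis using singular_zero by (auto simp: Sq_points_def q_eq_Rb_iff)
qed

lemma singular_if_point: "pt sm x \<in> points \<Longrightarrow> singular x"
  using singular_iff_point by blast

lemma singular_if_mem_line:
  assumes "pline sm a b \<subseteq> points"
  shows "singular (sm a x + sm b y)"
proof (cases "sm a x + sm b y = 0")
  case False
  then have "pt sm (sm a x + sm b y) \<in> pline sm a b" unfolding pline_def by blast
  then show ?thesis using assms singular_if_point by blast
qed (simp add: singular_zero)

lemma collinear_if_orth: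
  assumes x: "singular x" and z: "singular z" and "x \<noteq> 0" "z \<noteq> 0" "fq x z = 0"
  shows "collinear lines (pt sm x) (pt sm z)"
proof (cases "pt sm x = pt sm z")
  case False
  have "pline sm x z \<subseteq> points"
  proof
    fix p assume "p \<in> pline sm x z"
    then obtain a b where p: "p = pt sm (sm x a + sm z b)" and "sm x a + sm z b \<noteq> 0"
      unfolding pline_def by blast
    moreover have "singular (sm x a + sm z b)" by (rule singular_comb_if_orth[OF x z \<open>fq x z = 0\<close>])
    ultimately show "p \<in> points" by (simp add: singular_iff_point)
  qed
  with assms False have "pline sm x z \<in> lines" unfolding Sq_lines_def by blast
  moreover have "pt sm x \<in> pline sm x z" "pt sm z \<in> pline sm x z"
    using assms by (simp_all add: mem_pline_left mem_pline_right)
  ultimately show ?thesis unfolding collinear_def by blast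
qed (simp add: collinear_def)

lemma hyperbolic_partner:
  assumes x: "pt sm x \<in> points" "x \<noteq> 0" and nonradical: "pt sm x \<notin> radical points lines"
  obtains c where "singular c" "fq x c = 1"
proof -
  obtain p where "p \<in> points" "\<not> collinear lines (pt sm x) p"
    using x nonradical unfolding radical_def by blast
  then obtain z where z: "z \<noteq> 0" "singular z" "\<not> collinear lines (pt sm x) (pt sm z)"
    unfolding Sq_points_def[of sm q Rb] by (auto simp: q_eq_Rb_iff)
  then have "fq x z \<noteq> 0" using collinear_if_orth[of x z] x singular_if_point by blast
  then show ?thesis
    using that[of "sm z (inverse (fq x z))"] singular_sm[OF z(2)] by (simp add: fq_sm_right)
qed

lemma line_disjoint_from_radical:
  assumes "nondeg_rank_ge2 (Sq sm q Rb)"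
  obtains l where "l \<in> lines" "l \<inter> radical points lines = {}"
proof -
  obtain X0 X1 where X: "singular_subspace (quot_points points lines) (quot_lines points lines) X1"
    "{} \<subset> X0" "X0 \<subset> X1"
    using assms unfolding nondeg_rank_ge2_def rank_ge2_def Sq_def by auto
  then obtain p r where "p \<in> X1" "r \<in> X1" "p \<noteq> r" by blast
  then have "collinear (quot_lines points lines) p r" "p \<noteq> r"
    using X(1) unfolding singular_subspace_def by blast+
  then obtain l' where "l' \<in> quot_lines points lines" unfolding collinear_def by blast
  then show ?thesis using that unfolding quot_lines_def by blast
qed

definition hyperbolic_frame :: "'v \<Rightarrow> 'v \<Rightarrow> 'v \<Rightarrow> 'v \<Rightarrow> bool" where
  "hyperbolic_frame a b c d \<longleftrightarrow> singular a \<and> singular b \<and> singular c \<and> singular d \<and>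
     fq a b = 0 \<and> fq c d = 0 \<and> fq a d = 0 \<and> fq b c = 0 \<and> fq a c = 1 \<and> fq b d = 1"

end

context nontrivial_gen_qform
begin

text \<open>Given a hyperbolic pair (a, c) and a singular b orthogonal to it, a singular d0 not orthogonal
  to b is corrected first by multiples of a and c (into the orthogonal complement of the pair), then
  by a multiple of b (to become singular), and finally rescaled.\<close>

lemma complete_hyperbolic_frame:
  assumes a: "singular a" and b: "singular b" and c: "singular c" and d0: "singular d0"
    and fac: "fq a c = 1" and fab: "fq a b = 0" and fbc: "fq b c = 0" and fbd0: "fq b d0 \<noteq> 0"
  shows "\<exists>d. hyperbolic_frame a b c d"
proof -
  have faa: "fq a a = 0" and fcc: "fq c c = 0" and fbb: "fq b b = 0"
    using a b c by (simp_all add: fq_singular_self)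
  have fca: "fq c a = \<epsilon>" using fq_swap[of c a] fac by simp
  have fba: "fq b a = 0" and fcb: "fq c b = 0" using fab fbc fq_swap_zero_iff by blast+
  define d' where "d' = d0 + (sm a (- (inverse \<epsilon> * fq c d0)) + sm c (- fq a d0))"
  have fad': "fq a d' = 0" and fcd': "fq c d' = 0" and fbd': "fq b d' = fq b d0"
    unfolding d'_def using epsilon_nonzero
    by (simp_all add: fq_add_right fq_sm_right faa fac fca fcc fba fbc mult.assoc[symmetric])
  have fd'b: "fq d' b \<noteq> 0" using fbd' fbd0 fq_swap_zero_iff by simp
  define d'' where "d'' = d' + (sm b (- (inverse (fq d' b) * Q d')) + sm a 0)"
  have "Q d'' - (Q d' + fq d' b * (- (inverse (fq d' b) * Q d'))) \<in> codefect"
    using Q_add_comb_congr[OF b a, of d' "- (inverse (fq d' b) * Q d')" 0] by (simp add: d''_def)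
  then have d'': "singular d''" using fd'b by (simp add: mult.assoc[symmetric])
  have "fq a d'' = 0" "fq c d'' = 0" "fq b d'' = fq b d0"
    unfolding d''_def by (simp_all add: fq_add_right fq_sm_right fad' fcd' fbd' fab fcb fbb)
  then have "hyperbolic_frame a b c (sm d'' (inverse (fq b d0)))"
    using a b c singular_sm[OF d''] fac fab fbc fbd0
    by (simp add: hyperbolic_frame_def fq_sm_right)
  then show ?thesis by blast
qed

lemma exists_hyperbolic_frame:
  assumes "nondeg_rank_ge2 (Sq sm q Rb)"
  shows "\<exists>a b c d. hyperbolic_frame a b c d"
proof -
  obtain l where l: "l \<in> lines" "l \<inter> radical points lines = {}"
    using line_disjoint_from_radical[OF assms] by blast
  then obtain a b0 where ab: "l = pline sm a b0" "a \<noteq> 0" "b0 \<noteq> 0" "pt sm a \<noteq> pt sm b0"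
    "pline sm a b0 \<subseteq> points"
    unfolding Sq_lines_def by blast
  have a: "singular a" and b0: "singular b0"
    using singular_if_mem_line[OF ab(5), of 1 0] singular_if_mem_line[OF ab(5), of 0 1] by simp_all
  have fab0: "fq a b0 = 0"
    using orth_iff_span_singular[OF a b0] singular_if_mem_line[OF ab(5)] by blast
  have "pt sm a \<in> l" using ab(1,2) mem_pline_left by simp
  then obtain c where c: "singular c" "fq a c = 1"
    using hyperbolic_partner[of a] ab l(2) by blast
  obtain \<mu> where \<mu>: "\<sigma> \<mu> = fq b0 c" using surj by blast
  define b where "b = sm a (- \<mu>) + sm b0 1"
  have b: "singular b" unfolding b_def by (rule singular_comb_if_orth[OF a b0 fab0])
  have fbc: "fq b c = 0" and fab: "fq a b = 0"
    unfolding b_def using c fq_singular_self[OF a] fab0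
    by (simp_all add: fq_add_left fq_add_right fq_sm_left fq_sm_right \<mu>)
  have "b \<noteq> 0"
  proof
    assume "b = 0"
    then have "b0 = sm a \<mu>" unfolding b_def by (simp add: sm_minus_right add_eq_0_iff2)
    then show False using ab(3,4) pt_sm by (cases "\<mu> = 0") auto
  qed
  moreover have "pt sm b \<in> l" unfolding ab(1) pline_def using \<open>b \<noteq> 0\<close> unfolding b_def by blast
  ultimately obtain d0 where "singular d0" "fq b d0 = 1"
    using hyperbolic_partner[of b] l ab(1,5) by blast
  then show ?thesis
    using complete_hyperbolic_frame[OF a b c(1) _ c(2) fab fbc] by force
qed

end

section \<open>Two quadratic forms with the same singular vectors\<close>

locale same_singular_vectors =
  F1: nontrivial_gen_qform sm \<sigma>1 \<epsilon>1 R1 q1 + F2: nontrivial_gen_qform sm \<sigma>2 \<epsilon>2 R2 q2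
  for sm :: "'v::ab_group_add \<Rightarrow> 'k::division_ring \<Rightarrow> 'v" and \<sigma>1 \<epsilon>1 R1 q1 \<sigma>2 \<epsilon>2 R2 q2 +
  assumes singular_iff: "F1.singular x \<longleftrightarrow> F2.singular x"
begin

lemma orth_iff:
  assumes "F1.singular y" "F1.singular w"
  shows "F1.fq y w = 0 \<longleftrightarrow> F2.fq y w = 0"
proof -
  have "F2.singular y" "F2.singular w" using assms singular_iff by blast+
  then show ?thesis
    using F1.orth_iff_span_singular[OF assms] F2.orth_iff_span_singular singular_iff by simp
qed

end

locale framed_pair = same_singular_vectors +
  fixes a b c d
  assumes frame: "F1.hyperbolic_frame a b c d"
begin

lemma singular_frame:
  "F1.singular a" "F1.singular b" "F1.singular c" "F1.singular d"
  "F2.singular a" "F2.singular b" "F2.singular c" "F2.singular d"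
  using frame singular_iff by (auto simp: F1.hyperbolic_frame_def)

lemma fq1_frame:
  "F1.fq a b = 0" "F1.fq b a = 0" "F1.fq c d = 0" "F1.fq d c = 0"
  "F1.fq a d = 0" "F1.fq d a = 0" "F1.fq b c = 0" "F1.fq c b = 0"
  "F1.fq a a = 0" "F1.fq c c = 0"
  "F1.fq a c = 1" "F1.fq c a = \<epsilon>1" "F1.fq b d = 1"
  using frame F1.fq_swap_zero_iff F1.fq_swap[of c a] singular_frame
  by (auto simp: F1.hyperbolic_frame_def F1.fq_singular_self)

lemma fq2_frame:
  "F2.fq a b = 0" "F2.fq b a = 0" "F2.fq c d = 0" "F2.fq d c = 0"
  "F2.fq a d = 0" "F2.fq d a = 0" "F2.fq b c = 0" "F2.fq c b = 0"
  "F2.fq a a = 0" "F2.fq c c = 0"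
  using singular_frame by (simp_all add: orth_iff[symmetric] fq1_frame)

definition \<kappa> where
  "\<kappa> = F2.fq a c"

lemma kappa_nonzero: "\<kappa> \<noteq> 0"
  using orth_iff[of a c] singular_frame fq1_frame by (simp add: \<kappa>_def)

text \<open>a + b l and c + d m are singular, and orthogonal for q1 exactly when 1 + \<sigma>1 l m = 0.\<close>

lemma fq2_comb_orth:
  assumes "1 + \<sigma>1 l * m = 0"
  shows "\<kappa> + \<sigma>2 l * F2.fq b d * m = 0"
proof -
  have u: "F1.singular (sm a 1 + sm b l)" and v: "F1.singular (sm c 1 + sm d m)"
    using F1.singular_comb_if_orth singular_frame fq1_frame by blast+
  have "F1.fq (sm a 1 + sm b l) (sm c 1 + sm d m) = 1 + \<sigma>1 l * m"
    by (simp add: F1.fq_add_left F1.fq_add_right F1.fq_sm_left F1.fq_sm_right fq1_frame)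
  then have "F2.fq (sm a 1 + sm b l) (sm c 1 + sm d m) = 0" using orth_iff[OF u v] assms by simp
  moreover have "F2.fq (sm a 1 + sm b l) (sm c 1 + sm d m) = \<kappa> + \<sigma>2 l * F2.fq b d * m"
    by (simp add: F2.fq_add_left F2.fq_add_right F2.fq_sm_left F2.fq_sm_right fq2_frame
        mult.assoc \<kappa>_def)
  ultimately show ?thesis by simp
qed

lemma fq2_b_d: "F2.fq b d = \<kappa>"
  using fq2_comb_orth[of 1 "- 1"] by simp

lemma sigma2_eq: "\<sigma>2 l = \<kappa> * \<sigma>1 l * inverse \<kappa>"
proof (cases "l = 0")
  case False
  then have s: "\<sigma>1 l \<noteq> 0" by simp
  have "\<kappa> + \<sigma>2 l * \<kappa> * (- inverse (\<sigma>1 l)) = 0"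
    using fq2_comb_orth[of l "- inverse (\<sigma>1 l)"] s by (simp add: fq2_b_d)
  then have "\<sigma>2 l * \<kappa> * inverse (\<sigma>1 l) = \<kappa>" by (simp add: algebra_simps)
  then have "\<sigma>2 l * \<kappa> = \<kappa> * \<sigma>1 l"
    using s by (metis mult.assoc mult_1_right left_inverse)
  then have "\<sigma>2 l * \<kappa> * inverse \<kappa> = \<kappa> * \<sigma>1 l * inverse \<kappa>" by simp
  then show ?thesis using kappa_nonzero by (simp add: mult.assoc)
qed simp

text \<open>Q1(a\<alpha> + c) \<equiv> \<sigma>1 \<alpha> and Q2(a\<alpha> + c) \<equiv> \<kappa> \<sigma>1 \<alpha>, while a\<alpha> + c is singular for both forms or
  for neither.\<close>

lemma codefect2_iff: "t \<in> F1.codefect \<longleftrightarrow> \<kappa> * t \<in> F2.codefect"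
proof -
  obtain \<alpha> where \<alpha>: "\<sigma>1 \<alpha> = t" using F1.surj by blast
  have "F1.Q (sm a \<alpha> + sm c 1) - \<sigma>1 \<alpha> * F1.fq a c * 1 \<in> F1.codefect"
    by (rule F1.Q_comb_singular_congr) (use singular_frame in auto)
  then have "t \<in> F1.codefect \<longleftrightarrow> F1.singular (sm a \<alpha> + sm c 1)"
    using F1.codefect_shift fq1_frame \<alpha> by auto
  also have "\<dots> \<longleftrightarrow> F2.singular (sm a \<alpha> + sm c 1)" by (rule singular_iff)
  also have "\<dots> \<longleftrightarrow> \<kappa> * t \<in> F2.codefect"
  proof -
    have "F2.Q (sm a \<alpha> + sm c 1) - \<sigma>2 \<alpha> * F2.fq a c * 1 \<in> F2.codefect"
      by (rule F2.Q_comb_singular_congr) (use singular_frame in auto)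
    moreover have "\<sigma>2 \<alpha> * F2.fq a c * 1 = \<kappa> * t"
      using kappa_nonzero by (simp add: sigma2_eq \<alpha> \<kappa>_def mult.assoc)
    ultimately show ?thesis using F2.codefect_shift by auto
  qed
  finally show ?thesis .
qed

lemma fq2_c_a: "F2.fq c a = \<kappa> * \<epsilon>1"
proof -
  have lin: "(inverse \<kappa> * F2.fq c a - \<epsilon>1) * \<alpha> \<in> F1.codefect" for \<alpha>
  proof -
    have "F2.Q (sm a \<alpha> + sm c 1) - \<sigma>2 \<alpha> * \<kappa> \<in> F2.codefect"
      using F2.Q_comb_singular_congr[of a c \<alpha> 1] singular_frame by (simp add: \<kappa>_def)
    moreover have "F2.Q (sm a \<alpha> + sm c 1) - F2.fq c a * \<alpha> \<in> F2.codefect"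
      using F2.Q_comb_singular_congr[of c a 1 \<alpha>] singular_frame by (simp add: add.commute)
    ultimately have "\<sigma>2 \<alpha> * \<kappa> - F2.fq c a * \<alpha> \<in> F2.codefect"
      using F2.codefect_diff by fastforce
    moreover have "\<sigma>2 \<alpha> * \<kappa> - F2.fq c a * \<alpha> = \<kappa> * (\<sigma>1 \<alpha> - inverse \<kappa> * F2.fq c a * \<alpha>)"
      using kappa_nonzero by (simp add: sigma2_eq algebra_simps mult_inverse_cancel_left)
    ultimately have "\<sigma>1 \<alpha> - inverse \<kappa> * F2.fq c a * \<alpha> \<in> F1.codefect"
      using codefect2_iff by simp
    moreover have "\<sigma>1 \<alpha> - \<epsilon>1 * \<alpha> \<in> F1.codefect"
      using F1.Ksig_subset_codefect F1.Ksig_trace[of "\<sigma>1 \<alpha>"] by (auto simp: F1.sigma_sigma_mult_epsilon)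
    ultimately show ?thesis using F1.codefect_diff by (fastforce simp: algebra_simps)
  qed
  have "inverse \<kappa> * F2.fq c a - \<epsilon>1 = 0"
  proof (rule ccontr)
    assume ne: "inverse \<kappa> * F2.fq c a - \<epsilon>1 \<noteq> 0"
    obtain s where "s \<notin> F1.codefect" using F1.codefect_proper F1.nontrivial by blast
    moreover have "s \<in> F1.codefect"
      using lin[of "inverse (inverse \<kappa> * F2.fq c a - \<epsilon>1) * s"] ne by (simp add: mult.assoc[symmetric])
    ultimately show False by blast
  qed
  then show ?thesis using mult_inverse_cancel_left[OF kappa_nonzero, of "F2.fq c a"] by simp
qed

lemma epsilon2_eq: "\<epsilon>2 = \<kappa> * \<sigma>1 (inverse \<kappa>) * \<epsilon>1"
proof -
  have "\<kappa> * \<epsilon>1 = \<sigma>2 \<kappa> * \<epsilon>2" using fq2_c_a F2.fq_swap[of c a] by (simp add: \<kappa>_def)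
  also have "\<dots> = \<kappa> * (\<sigma>1 \<kappa> * (inverse \<kappa> * \<epsilon>2))" by (simp add: sigma2_eq mult.assoc)
  finally have "inverse \<kappa> * (\<kappa> * \<epsilon>1) = inverse \<kappa> * (\<kappa> * (\<sigma>1 \<kappa> * (inverse \<kappa> * \<epsilon>2)))"
    by simp
  then have e: "\<epsilon>1 = \<sigma>1 \<kappa> * (inverse \<kappa> * \<epsilon>2)"
    by (simp only: inverse_mult_cancel_left[OF kappa_nonzero])
  have "\<kappa> * \<sigma>1 (inverse \<kappa>) * \<epsilon>1 = \<kappa> * (inverse (\<sigma>1 \<kappa>) * (\<sigma>1 \<kappa> * (inverse \<kappa> * \<epsilon>2)))"
    by (simp add: e mult.assoc)
  also have "\<dots> = \<epsilon>2"
    using kappa_nonzero by (simp add: inverse_mult_cancel_left mult_inverse_cancel_left)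
  finally show ?thesis by simp
qed

text \<open>Adding a combination of b and d, which are orthogonal to a and c for both forms, makes x
  singular without changing its products with a and c.\<close>

lemma fq2_orth_if_fq1_orth:
  assumes xa: "F1.fq x a = 0" and xc: "F1.fq x c = 0"
  shows "F2.fq x a = 0 \<and> F2.fq x c = 0"
proof -
  obtain s where s: "\<sigma>1 s = 1 - F1.fq x d" using F1.surj by blast
  define t where "t = - F1.Q x - F1.fq x b * s"
  define y where "y = x + (sm b s + sm d t)"
  have "F1.Q y - (F1.Q x + \<sigma>1 s * F1.fq b d * t + F1.fq x b * s + F1.fq x d * t) \<in> F1.codefect"
    unfolding y_def by (rule F1.Q_add_comb_congr) (use singular_frame in auto)
  moreover have "F1.Q x + \<sigma>1 s * F1.fq b d * t + F1.fq x b * s + F1.fq x d * t = 0"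
    unfolding s t_def fq1_frame by (simp add: algebra_simps)
  ultimately have y: "F1.singular y" by simp
  have "F1.fq y a = 0" "F1.fq y c = 0"
    unfolding y_def by (simp_all add: F1.fq_add_left F1.fq_sm_left xa xc fq1_frame)
  then have "F2.fq y a = 0" "F2.fq y c = 0" using orth_iff y singular_frame by blast+
  moreover have "F2.fq y a = F2.fq x a" "F2.fq y c = F2.fq x c"
    unfolding y_def by (simp_all add: F2.fq_add_left F2.fq_sm_left fq2_frame)
  ultimately show ?thesis by simp
qed

lemma fq2_a_c:
  "F2.fq x a = \<kappa> * F1.fq x a" "F2.fq x c = \<kappa> * F1.fq x c"
proof -
  obtain s where s: "\<sigma>1 s = - (F1.fq x a * inverse \<epsilon>1)" using F1.surj by blast
  obtain t where t: "\<sigma>1 t = - F1.fq x c" using F1.surj by blast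
  define x0 where "x0 = x + (sm c s + sm a t)"
  have "F1.fq x0 a = F1.fq x a + \<sigma>1 s * \<epsilon>1" "F1.fq x0 c = F1.fq x c + \<sigma>1 t"
    unfolding x0_def by (simp_all add: F1.fq_add_left F1.fq_sm_left fq1_frame)
  then have "F1.fq x0 a = 0" "F1.fq x0 c = 0"
    using F1.epsilon_nonzero by (simp_all add: s t mult.assoc)
  then have x0: "F2.fq x0 a = 0" "F2.fq x0 c = 0" using fq2_orth_if_fq1_orth by blast+
  have "F2.fq x0 a = F2.fq x a + \<kappa> * (\<sigma>1 s * (inverse \<kappa> * (\<kappa> * \<epsilon>1)))"
    unfolding x0_def by (simp add: F2.fq_add_left F2.fq_sm_left fq2_frame fq2_c_a sigma2_eq mult.assoc)
  also have "\<dots> = F2.fq x a - \<kappa> * F1.fq x a"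
    using kappa_nonzero F1.epsilon_nonzero by (simp add: s inverse_mult_cancel_left mult.assoc)
  finally show "F2.fq x a = \<kappa> * F1.fq x a" using x0 by simp
  have "F2.fq x0 c = F2.fq x c + \<kappa> * (\<sigma>1 t * (inverse \<kappa> * \<kappa>))"
    unfolding x0_def by (simp add: F2.fq_add_left F2.fq_sm_left fq2_frame \<kappa>_def sigma2_eq mult.assoc)
  also have "\<dots> = F2.fq x c - \<kappa> * F1.fq x c" using kappa_nonzero by (simp add: t)
  finally show "F2.fq x c = \<kappa> * F1.fq x c" using x0 by simp
qed

text \<open>Correct x by a combination of a and c to a vector y that is singular for q1, hence for q2,
  and compare the two congruences for Q y.\<close>

lemma Q2_congr: "F2.Q x - \<kappa> * F1.Q x \<in> F2.codefect"
proof -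
  obtain s where s: "\<sigma>1 s = 1 - F1.fq x c" using F1.surj by blast
  define t where "t = - F1.Q x - F1.fq x a * s"
  define y where "y = x + (sm a s + sm c t)"
  have "F1.Q y - (F1.Q x + \<sigma>1 s * F1.fq a c * t + F1.fq x a * s + F1.fq x c * t) \<in> F1.codefect"
    unfolding y_def by (rule F1.Q_add_comb_congr) (use singular_frame in auto)
  moreover have "F1.Q x + \<sigma>1 s * F1.fq a c * t + F1.fq x a * s + F1.fq x c * t = 0"
    unfolding s t_def fq1_frame by (simp add: algebra_simps)
  ultimately have "F2.singular y" using singular_iff by simp
  moreover have "F2.Q y - (F2.Q x + \<sigma>2 s * F2.fq a c * t + F2.fq x a * s + F2.fq x c * t)
      \<in> F2.codefect"
    unfolding y_def by (rule F2.Q_add_comb_congr) (use singular_frame in auto)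
  moreover have "\<sigma>2 s * F2.fq a c * t + F2.fq x a * s + F2.fq x c * t
      = \<kappa> * (\<sigma>1 s * t + F1.fq x a * s + F1.fq x c * t)"
    using kappa_nonzero
    by (simp add: sigma2_eq \<kappa>_def[symmetric] fq2_a_c fq1_frame algebra_simps inverse_mult_cancel_left)
  moreover have "\<sigma>1 s * t + F1.fq x a * s + F1.fq x c * t = - F1.Q x"
    unfolding s t_def by (simp add: algebra_simps)
  ultimately show ?thesis using F2.codefect_shift by (simp add: add.assoc)
qed

lemma codefect2_eq_image: "F2.codefect = (\<lambda>t. \<kappa> * t) ` F1.codefect"
proof (rule set_eqI)
  fix u
  have "u = \<kappa> * (inverse \<kappa> * u)" using kappa_nonzero by (simp add: mult_inverse_cancel_left)
  then show "u \<in> F2.codefect \<longleftrightarrow> u \<in> (\<lambda>t. \<kappa> * t) ` F1.codefect"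
    using codefect2_iff by (metis image_iff)
qed

lemma kbar2_eq_image: "kbar \<sigma>2 \<epsilon>2 (\<kappa> * t) = (\<lambda>k. \<kappa> * k) ` kbar \<sigma>1 \<epsilon>1 t"
proof -
  have "\<sigma>2 = (\<lambda>t. \<kappa> * \<sigma>1 t * inverse \<kappa>)" by (rule ext) (rule sigma2_eq)
  then have "Ksig \<sigma>2 \<epsilon>2 = (\<lambda>k. \<kappa> * k) ` Ksig \<sigma>1 \<epsilon>1"
    using F1.Ksig_image_mult[OF kappa_nonzero] epsilon2_eq by simp
  then show ?thesis
    unfolding kbar_def by (simp add: image_elt_set_plus_additive distrib_left)
qed

lemma R2_eq_image: "R2 = (\<lambda>X. (\<lambda>k. \<kappa> * k) ` X) ` R1"
proof -
  have "(\<lambda>X. (\<lambda>k. \<kappa> * k) ` X) ` R1 = (\<lambda>X. (\<lambda>k. \<kappa> * k) ` X) ` kbar \<sigma>1 \<epsilon>1 ` F1.codefect"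
    by (simp only: F1.image_kbar_codefect)
  also have "\<dots> = kbar \<sigma>2 \<epsilon>2 ` (\<lambda>t. \<kappa> * t) ` F1.codefect"
    by (simp add: image_image kbar2_eq_image)
  also have "\<dots> = R2"
    by (simp only: codefect2_eq_image[symmetric] F2.image_kbar_codefect)
  finally show ?thesis by simp
qed

lemma q2_eq_image: "q2 x = (\<lambda>X. (\<lambda>k. \<kappa> * k) ` X) ` q1 x"
proof -
  have "(\<lambda>X. (\<lambda>k. \<kappa> * k) ` X) ` q1 x
      = (\<lambda>X. (\<lambda>k. \<kappa> * k) ` X) ` (kbar \<sigma>1 \<epsilon>1 (F1.Q x) +o R1)"
    by (simp only: F1.q_eq_coset_Q[of x])
  also have "\<dots> = kbar \<sigma>2 \<epsilon>2 (\<kappa> * F1.Q x) +o (\<lambda>X. (\<lambda>k. \<kappa> * k) ` X) ` R1"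
    by (subst image_elt_set_plus_additive) (simp_all add: image_mult_set_plus kbar2_eq_image)
  also have "\<dots> = kbar \<sigma>2 \<epsilon>2 (F2.Q x) +o R2"
  proof -
    have "kbar \<sigma>2 \<epsilon>2 (F2.Q x) +o R2 = kbar \<sigma>2 \<epsilon>2 (\<kappa> * F1.Q x) +o R2"
      using Q2_congr F2.coset_eq_iff by blast
    then show ?thesis by (simp only: R2_eq_image[symmetric])
  qed
  finally show ?thesis by (simp only: F2.q_eq_coset_Q[of x])
qed

end

theorem mainTheorem12:
  fixes sm :: "'v::ab_group_add \<Rightarrow> 'k::division_ring \<Rightarrow> 'v"
    and \<sigma>1 \<sigma>2 :: "'k \<Rightarrow> 'k" and \<epsilon>1 \<epsilon>2 :: 'k
    and R1 R2 :: "'k set set"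
    and q1 q2 :: "'v \<Rightarrow> 'k set set"
  assumes V: "right_vector_space sm"
    and adm1: "admissible \<sigma>1 \<epsilon>1"
    and adm2: "admissible \<sigma>2 \<epsilon>2"
    and q1: "gen_quadratic_form sm \<sigma>1 \<epsilon>1 R1 q1"
    and q2: "gen_quadratic_form sm \<sigma>2 \<epsilon>2 R2 q2"
    and nt1: "nontrivial_qform q1 R1"
    and nt2: "nontrivial_qform q2 R2"
    and same: "Sq sm q1 R1 = Sq sm q2 R2"
    and rk: "nondeg_rank_ge2 (Sq sm q1 R1)"
  shows "\<exists>\<kappa>. \<kappa> \<noteq> 0 \<and>
           (\<forall>t. \<sigma>2 t = \<kappa> * \<sigma>1 t * inverse \<kappa>) \<and>
           \<epsilon>2 = \<kappa> * \<sigma>1 (inverse \<kappa>) * \<epsilon>1 \<and>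
           R2 = (\<lambda>X. (\<lambda>k. \<kappa> * k) ` X) ` R1 \<and>
           (\<forall>x. q2 x = (\<lambda>X. (\<lambda>k. \<kappa> * k) ` X) ` q1 x)"
proof -
  interpret F1: nontrivial_gen_qform sm \<sigma>1 \<epsilon>1 R1 q1
    using V adm1 q1 nt1
    by unfold_locales (simp_all add: right_vector_space_def admissible_def)
  interpret F2: nontrivial_gen_qform sm \<sigma>2 \<epsilon>2 R2 q2
    using V adm2 q2 nt2
    by unfold_locales (simp_all add: right_vector_space_def admissible_def)
  have "F1.singular x \<longleftrightarrow> F2.singular x" for x
    using same F1.singular_iff_point F2.singular_iff_point by (simp add: Sq_def)
  then interpret same_singular_vectors sm \<sigma>1 \<epsilon>1 R1 q1 \<sigma>2 \<epsilon>2 R2 q2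
    by unfold_locales
  obtain a b c d where "F1.hyperbolic_frame a b c d"
    using F1.exists_hyperbolic_frame[OF rk] by blast
  then interpret framed_pair sm \<sigma>1 \<epsilon>1 R1 q1 \<sigma>2 \<epsilon>2 R2 q2 a b c d
    by unfold_locales
  show ?thesis
    by (intro exI[of _ \<kappa>] conjI allI kappa_nonzero sigma2_eq epsilon2_eq R2_eq_image q2_eq_image)
qed

end
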